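(* Let $\mathcal{M}=(K,G,A,(\gamma')_{\gamma\in\Gamma},(\delta')_{\delta\in\Delta})$ be a model of $T$ and let $K'=\mathbb{Q}\big(\{\operatorname{Re}(\gamma'\delta'):\gamma\in\Gamma,\delta\in\Delta\}\big)^{\mathrm{rc}}\subseteq K$. Then $\lambda((K')^{>0})=\Delta'$.
   Context: $T$ is the theory of structures $(K,G,A,(\gamma')_{\gamma\in\Gamma},(\delta')_{\delta\in\Delta})$ (for a fixed finite rank $\Gamma\le\mathbb{S}^1$ and $\Delta=\varepsilon^{\mathbb{Z}}$, real $\varepsilon>1$) with $K$ real closed, $A\le K^{>0}$ having $\varepsilon'$ as least element $>1$, $G$ a dense subgroup of $\mathbb{S}^1(K)$, for all $k\in K^{>0}$ some $a\in A$ with $a\le k<a\varepsilon'$, $\gamma\mapsto\gamma'$ and $\delta\mapsto\delta'$ homomorphisms into $G$ and $A$, the orientation axioms (for all $Q\in\mathbb{Z}[x_1,\dots,x_n]$, $Q(\operatorname{Re}(\gamma_1'\delta_1'),\dots)>0$ in $K$ iff $Q(\operatorname{Re}(\gamma_1\delta_1),\dots)>0$ in $\mathbb{R}$), the Mann axioms, and torsion of $G$ equal to the image of torsion of $\Gamma$. $F^{\mathrm{rc}}$ is the real closure inside $K$. $\lambda:K^{>0}\to A$ sends $k$ to the unique $a\in A$ with $a\le k<a\varepsilon'$; $\Delta'=\{\delta':\delta\in\Delta\}$. *)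

theory Defs
  imports Complex_Main "HOL-Computational_Algebra.Polynomial"
begin

definition real_closed :: "'k::linordered_field itself \<Rightarrow> bool" where
  "real_closed (_::'k itself) \<longleftrightarrow>
     (\<forall>x::'k. 0 \<le> x \<longrightarrow> (\<exists>y. y * y = x)) \<and>
     (\<forall>p::'k poly. odd (degree p) \<longrightarrow> (\<exists>x. poly p x = 0))"

definition is_subfield :: "'k::field set \<Rightarrow> bool" where
  "is_subfield F \<longleftrightarrow> 0 \<in> F \<and> 1 \<in> F \<and>
     (\<forall>x\<in>F. \<forall>y\<in>F. x + y \<in> F \<and> x * y \<in> F) \<and>
     (\<forall>x\<in>F. - x \<in> F \<and> inverse x \<in> F)"

text \<open>The subfield generated by S (i.e. Q(S) inside a characteristic 0 field).\<close>
definition gen_subfield :: "'k::field set \<Rightarrow> 'k set" where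
  "gen_subfield S = \<Inter> {F. is_subfield F \<and> S \<subseteq> F}"

text \<open>Real closure of a subfield F inside the real closed field K: the relative
  algebraic closure of F in K.\<close>
definition rc_in :: "'k::field set \<Rightarrow> 'k set" where
  "rc_in F = {x. \<exists>p::'k poly. p \<noteq> 0 \<and> (\<forall>i. coeff p i \<in> F) \<and> poly p x = 0}"

section \<open>The unit circle S^1(K) as pairs (Re, Im)\<close>

definition cmul :: "'k::comm_ring_1 \<times> 'k \<Rightarrow> 'k \<times> 'k \<Rightarrow> 'k \<times> 'k" where
  "cmul u v = (fst u * fst v - snd u * snd v, fst u * snd v + snd u * fst v)"

definition cinv :: "'k::comm_ring_1 \<times> 'k \<Rightarrow> 'k \<times> 'k" where
  "cinv u = (fst u, - snd u)"

fun cpow :: "'k::comm_ring_1 \<times> 'k \<Rightarrow> nat \<Rightarrow> 'k \<times> 'k" where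
  "cpow u 0 = (1, 0)"
| "cpow u (Suc n) = cmul u (cpow u n)"

definition circle :: "('k::comm_ring_1 \<times> 'k) set" where
  "circle = {u. fst u * fst u + snd u * snd u = 1}"

definition circle_subgroup :: "complex set \<Rightarrow> bool" where
  "circle_subgroup \<Gamma> \<longleftrightarrow> 1 \<in> \<Gamma> \<and> (\<forall>x\<in>\<Gamma>. cmod x = 1) \<and>
     (\<forall>x\<in>\<Gamma>. \<forall>y\<in>\<Gamma>. x * y \<in> \<Gamma>) \<and> (\<forall>x\<in>\<Gamma>. inverse x \<in> \<Gamma>)"

definition finite_rank :: "complex set \<Rightarrow> bool" where
  "finite_rank \<Gamma> \<longleftrightarrow> (\<exists>F. finite F \<and> F \<subseteq> \<Gamma> \<and>
     (\<forall>\<gamma>\<in>\<Gamma>. \<exists>m::nat. m > 0 \<and> (\<exists>k::complex \<Rightarrow> int. \<gamma> ^ m = (\<Prod>f\<in>F. f powi k f))))"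

datatype ipoly = IVar nat | IConst int | IAdd ipoly ipoly | IMul ipoly ipoly

primrec ieval :: "ipoly \<Rightarrow> (nat \<Rightarrow> 'a::comm_ring_1) \<Rightarrow> 'a" where
  "ieval (IVar i) x = x i"
| "ieval (IConst c) x = of_int c"
| "ieval (IAdd p q) x = ieval p x + ieval q x"
| "ieval (IMul p q) x = ieval p x * ieval q x"

text \<open>Nondegenerate solutions of a_0 x_0 + ... + a_(n-1) x_(n-1) = 1: no proper
  nonempty subsum vanishes.\<close>
definition nondeg_C :: "nat \<Rightarrow> (nat \<Rightarrow> rat) \<Rightarrow> (nat \<Rightarrow> complex) \<Rightarrow> bool" where
  "nondeg_C n a x \<longleftrightarrow> (\<forall>I. I \<subseteq> {..<n} \<and> I \<noteq> {} \<and> I \<noteq> {..<n} \<longrightarrow>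
      (\<Sum>i\<in>I. of_rat (a i) * x i) \<noteq> 0)"

definition nondeg_K :: "nat \<Rightarrow> (nat \<Rightarrow> rat) \<Rightarrow> (nat \<Rightarrow> 'k::field_char_0 \<times> 'k) \<Rightarrow> bool" where
  "nondeg_K n a x \<longleftrightarrow> (\<forall>I. I \<subseteq> {..<n} \<and> I \<noteq> {} \<and> I \<noteq> {..<n} \<longrightarrow>
      \<not> ((\<Sum>i\<in>I. of_rat (a i) * fst (x i)) = 0 \<and> (\<Sum>i\<in>I. of_rat (a i) * snd (x i)) = 0))"

definition model_T ::
  "complex set \<Rightarrow> real \<Rightarrow> ('k::linordered_field \<times> 'k) set \<Rightarrow> 'k set
     \<Rightarrow> (complex \<Rightarrow> 'k \<times> 'k) \<Rightarrow> (real \<Rightarrow> 'k) \<Rightarrow> bool" where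
  "model_T \<Gamma> \<epsilon> G A gp dp \<longleftrightarrow>
     \<comment> \<open>K real closed\<close>
     real_closed TYPE('k) \<and>
     \<comment> \<open>G a dense subgroup of S^1(K)\<close>
     G \<subseteq> circle \<and> (1, 0) \<in> G \<and> (\<forall>u\<in>G. \<forall>v\<in>G. cmul u v \<in> G) \<and> (\<forall>u\<in>G. cinv u \<in> G) \<and>
     (\<forall>u\<in>circle. \<forall>e>0. \<exists>g\<in>G. \<bar>fst g - fst u\<bar> < e \<and> \<bar>snd g - snd u\<bar> < e) \<and>
     \<comment> \<open>A a subgroup of K^{>0} with least element >1 equal to epsilon'\<close>
     A \<subseteq> {x. 0 < x} \<and> 1 \<in> A \<and> (\<forall>a\<in>A. \<forall>b\<in>A. a * b \<in> A) \<and> (\<forall>a\<in>A. inverse a \<in> A) \<and>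
     dp \<epsilon> \<in> A \<and> 1 < dp \<epsilon> \<and> (\<forall>a\<in>A. 1 < a \<longrightarrow> dp \<epsilon> \<le> a) \<and>
     (\<forall>k>0. \<exists>a\<in>A. a \<le> k \<and> k < a * dp \<epsilon>) \<and>
     \<comment> \<open>homomorphisms Gamma -> G and Delta -> A\<close>
     (\<forall>\<gamma>\<in>\<Gamma>. gp \<gamma> \<in> G) \<and> (\<forall>\<gamma>1\<in>\<Gamma>. \<forall>\<gamma>2\<in>\<Gamma>. gp (\<gamma>1 * \<gamma>2) = cmul (gp \<gamma>1) (gp \<gamma>2)) \<and>
     (\<forall>\<delta>\<in>range (\<lambda>k::int. \<epsilon> powi k). dp \<delta> \<in> A) \<and>
     (\<forall>\<delta>1\<in>range (\<lambda>k::int. \<epsilon> powi k). \<forall>\<delta>2\<in>range (\<lambda>k::int. \<epsilon> powi k).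
         dp (\<delta>1 * \<delta>2) = dp \<delta>1 * dp \<delta>2) \<and>
     \<comment> \<open>orientation axioms\<close>
     (\<forall>Q::ipoly. \<forall>g::nat \<Rightarrow> complex. \<forall>d::nat \<Rightarrow> real.
        (\<forall>i. g i \<in> \<Gamma>) \<and> (\<forall>i. d i \<in> range (\<lambda>k::int. \<epsilon> powi k)) \<longrightarrow>
        (0 < ieval Q (\<lambda>i. fst (gp (g i)) * dp (d i)) \<longleftrightarrow>
         0 < ieval Q (\<lambda>i. Re (g i * complex_of_real (d i))))) \<and>
     \<comment> \<open>Mann axioms: nondegenerate solutions in G^n come from those in Gamma^n\<close>
     (\<forall>n::nat. \<forall>a::nat \<Rightarrow> rat. \<forall>x::nat \<Rightarrow> 'k \<times> 'k.
        (\<forall>i<n. x i \<in> G) \<and> (\<Sum>i<n. of_rat (a i) * fst (x i)) = 1 \<and>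
        (\<Sum>i<n. of_rat (a i) * snd (x i)) = 0 \<and> nondeg_K n a x \<longrightarrow>
        (\<exists>\<gamma>::nat \<Rightarrow> complex. (\<forall>i<n. \<gamma> i \<in> \<Gamma> \<and> x i = gp (\<gamma> i)) \<and>
           (\<Sum>i<n. of_rat (a i) * \<gamma> i) = 1 \<and> nondeg_C n a \<gamma>)) \<and>
     \<comment> \<open>torsion of G is the image of the torsion of Gamma\<close>
     {u\<in>G. \<exists>m>0. cpow u m = (1, 0)} = gp ` {\<gamma>\<in>\<Gamma>. \<exists>m>0. \<gamma> ^ m = 1}"

definition lam :: "'k::linordered_field set \<Rightarrow> 'k \<Rightarrow> 'k \<Rightarrow> 'k" where
  "lam A e k = (THE a. a \<in> A \<and> a \<le> k \<and> k < a * e)"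

end

theory Submission
  imports Defs
begin

(* The orientation axioms carry every polynomial inequality between the real numbers
   Re(gamma delta) over to the same inequality between the generators Re(gamma' delta') of K'.
   As R is archimedean, each nonzero value r of an integer polynomial in the Re(gamma delta)
   satisfies eps^-n <= |r| <= eps^n for some n; since eps = Re(1 eps) is itself a generator,
   this is a polynomial inequality, so every nonzero element y of the ring generated by the
   Re(gamma' delta') satisfies eps'^-n <= |y| <= eps'^n. Such two-sided bounds survive
   quotients, hence hold on Q(...), and by Cauchy's root bound (applied to a polynomial over
   Q(...) with root x and to its reflection, which has root 1/x) also on the relative
   algebraic closure K'. For positive x in K' the element lambda(x) eps'^(n+1) of A then lies
   strictly between 1 and eps'^(2n+2); as eps' is the least element of A above 1, it is a power
   of eps', and so lambda(x) is in Delta'. Conversely each delta' = Re(1' delta') lies in K'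
   and is its own lambda. *)

primrec ipoly_rename :: "(nat \<Rightarrow> nat) \<Rightarrow> ipoly \<Rightarrow> ipoly" where
  "ipoly_rename f (IVar i) = IVar (f i)"
| "ipoly_rename f (IConst c) = IConst c"
| "ipoly_rename f (IAdd p q) = IAdd (ipoly_rename f p) (ipoly_rename f q)"
| "ipoly_rename f (IMul p q) = IMul (ipoly_rename f p) (ipoly_rename f q)"

lemma ieval_ipoly_rename [simp]: "ieval (ipoly_rename f p) x = ieval p (x \<circ> f)"
  by (induction p) auto

primrec ipoly_power :: "ipoly \<Rightarrow> nat \<Rightarrow> ipoly" where
  "ipoly_power p 0 = IConst 1"
| "ipoly_power p (Suc n) = IMul p (ipoly_power p n)"

lemma ieval_ipoly_power [simp]: "ieval (ipoly_power p n) x = ieval p x ^ n"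
  by (induction n) auto

definition ipoly_diff :: "ipoly \<Rightarrow> ipoly \<Rightarrow> ipoly" where
  "ipoly_diff p q = IAdd p (IMul (IConst (-1)) q)"

lemma ieval_ipoly_diff [simp]: "ieval (ipoly_diff p q) x = ieval p x - ieval q x"
  by (simp add: ipoly_diff_def)

lemma abs_root_le_Cauchy_bound:
  fixes p :: "'k::linordered_field poly"
  assumes "p \<noteq> 0" and "poly p x = 0"
  shows "\<bar>x\<bar> \<le> max 1 (\<Sum>i<degree p. \<bar>coeff p i / lead_coeff p\<bar>)"
proof (rule ccontr)
  define n where "n = degree p"
  define c where "c = lead_coeff p"
  define s where "s = (\<Sum>i<n. \<bar>coeff p i\<bar>)"
  have "c \<noteq> 0" using assms(1) by (simp add: c_def)
  assume "\<not> ?thesis"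
  hence x_gt_1: "1 < \<bar>x\<bar>" and "s / \<bar>c\<bar> < \<bar>x\<bar>"
    by (auto simp: n_def c_def s_def sum_divide_distrib)
  hence s_less: "s < \<bar>c\<bar> * \<bar>x\<bar>"
    using \<open>c \<noteq> 0\<close> by (simp add: divide_less_eq mult.commute)
  have "poly p x = (\<Sum>i<n. coeff p i * x ^ i) + c * x ^ n"
    by (simp add: poly_altdef n_def c_def lessThan_Suc_atMost[symmetric])
  hence leading: "c * x ^ n = - (\<Sum>i<n. coeff p i * x ^ i)"
    using assms(2) by (simp add: eq_neg_iff_add_eq_0 add.commute)
  hence "n \<noteq> 0"
    using \<open>c \<noteq> 0\<close> by (cases n) auto
  from leading have "\<bar>c\<bar> * \<bar>x\<bar> ^ n = \<bar>\<Sum>i<n. coeff p i * x ^ i\<bar>"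
    by (metis abs_minus_cancel abs_mult power_abs)
  also have "\<dots> \<le> (\<Sum>i<n. \<bar>coeff p i\<bar> * \<bar>x\<bar> ^ i)"
    by (rule order_trans[OF sum_abs]) (simp add: abs_mult power_abs)
  also have "\<dots> \<le> (\<Sum>i<n. \<bar>coeff p i\<bar> * \<bar>x\<bar> ^ (n - 1))"
    using x_gt_1 by (intro sum_mono mult_left_mono power_increasing) auto
  also have "\<dots> = s * \<bar>x\<bar> ^ (n - 1)"
    by (simp add: s_def sum_distrib_right)
  finally have "\<bar>c\<bar> * \<bar>x\<bar> ^ n \<le> s * \<bar>x\<bar> ^ (n - 1)" .
  hence "\<bar>c\<bar> * \<bar>x\<bar> * \<bar>x\<bar> ^ (n - 1) \<le> s * \<bar>x\<bar> ^ (n - 1)"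
    using \<open>n \<noteq> 0\<close> by (metis mult.assoc power_eq_if)
  thus False
    using s_less x_gt_1 by (simp add: mult_le_cancel_right)
qed

definition power_bounded :: "'k::linordered_field \<Rightarrow> 'k \<Rightarrow> bool" where
  "power_bounded e y \<longleftrightarrow> (\<exists>n. \<bar>y\<bar> \<le> e ^ n \<and> (y \<noteq> 0 \<longrightarrow> 1 \<le> \<bar>y\<bar> * e ^ n))"

lemma power_bounded_intro:
  assumes "1 \<le> e" and "\<bar>y\<bar> \<le> e ^ n" and "y \<noteq> 0 \<Longrightarrow> 1 \<le> \<bar>y\<bar> * e ^ m"
  shows "power_bounded e y"
proof -
  have "e ^ n \<le> e ^ (n + m)" and "e ^ m \<le> e ^ (n + m)"
    using assms(1) by (simp_all add: power_increasing)
  hence "\<bar>y\<bar> * e ^ m \<le> \<bar>y\<bar> * e ^ (n + m)"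
    by (simp add: mult_left_mono)
  hence "y \<noteq> 0 \<longrightarrow> 1 \<le> \<bar>y\<bar> * e ^ (n + m)"
    using assms(3) by (meson order_trans)
  moreover have "\<bar>y\<bar> \<le> e ^ (n + m)"
    using assms(2) \<open>e ^ n \<le> e ^ (n + m)\<close> by (rule order_trans)
  ultimately show ?thesis
    unfolding power_bounded_def by blast
qed

lemma power_bounded_iff_squares:
  assumes "0 \<le> e"
  shows "power_bounded e y \<longleftrightarrow> (\<exists>n. y\<^sup>2 \<le> (e ^ n)\<^sup>2 \<and> (y \<noteq> 0 \<longrightarrow> 1 \<le> (y * e ^ n)\<^sup>2))"
proof -
  have "\<bar>y\<bar> \<le> e ^ n \<longleftrightarrow> y\<^sup>2 \<le> (e ^ n)\<^sup>2" for n
    using assms by (simp add: power2_le_iff_abs_le)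
  moreover have "1 \<le> \<bar>y\<bar> * e ^ n \<longleftrightarrow> 1 \<le> (y * e ^ n)\<^sup>2" for n
    using abs_le_square_iff[of 1 "y * e ^ n"] assms by (simp add: abs_mult)
  ultimately show ?thesis
    unfolding power_bounded_def by simp
qed

lemma power_bounded_real:
  assumes "1 < e"
  shows "power_bounded e (r::real)"
proof -
  obtain n where "\<bar>r\<bar> < e ^ n"
    using real_arch_pow[OF assms] by blast
  moreover obtain m where "inverse \<bar>r\<bar> < e ^ m"
    using real_arch_pow[OF assms] by blast
  hence "r \<noteq> 0 \<Longrightarrow> 1 \<le> \<bar>r\<bar> * e ^ m"
    by (simp add: field_simps)
  ultimately show ?thesis
    using assms by (intro power_bounded_intro[of e r n m]) auto
qed

lemma power_bounded_divide:
  assumes "1 \<le> e" and "power_bounded e a" and "power_bounded e b"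
  shows "power_bounded e (a / b)"
proof (cases "b = 0")
  case True
  thus ?thesis
    using assms(1) by (auto simp: power_bounded_def)
next
  case False
  obtain n where a_le: "\<bar>a\<bar> \<le> e ^ n" and a_ge: "a \<noteq> 0 \<longrightarrow> 1 \<le> \<bar>a\<bar> * e ^ n"
    using assms(2) by (auto simp: power_bounded_def)
  obtain m where b_le: "\<bar>b\<bar> \<le> e ^ m" and b_ge: "1 \<le> \<bar>b\<bar> * e ^ m"
    using assms(3) False by (auto simp: power_bounded_def)
  have "e ^ n * 1 \<le> e ^ n * (\<bar>b\<bar> * e ^ m)"
    using b_ge assms(1) by (intro mult_left_mono) simp_all
  hence "\<bar>a\<bar> \<le> e ^ n * (\<bar>b\<bar> * e ^ m)"
    using a_le by simp
  hence "\<bar>a / b\<bar> \<le> e ^ (n + m)"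
    using False by (simp add: abs_divide divide_le_eq power_add algebra_simps)
  moreover have "1 \<le> \<bar>a / b\<bar> * e ^ (n + m)" if "a / b \<noteq> 0"
  proof -
    have "1 \<le> \<bar>a\<bar> * e ^ n"
      using a_ge that by auto
    also have "\<dots> \<le> \<bar>a\<bar> * (e ^ m / \<bar>b\<bar>) * e ^ n"
      using b_le False assms(1) by (simp add: field_simps mult_left_mono mult_right_mono)
    finally show ?thesis
      by (simp add: abs_divide power_add algebra_simps)
  qed
  ultimately show ?thesis
    unfolding power_bounded_def by blast
qed

lemma is_subfield_sum:
  assumes "is_subfield F" and "\<And>i. i \<in> I \<Longrightarrow> f i \<in> F"
  shows "sum f I \<in> F"
  using assms(2)
  by (induction I rule: infinite_finite_induct) (use assms(1) in \<open>auto simp: is_subfield_def\<close>)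

lemma is_subfield_divide: "is_subfield F \<Longrightarrow> x \<in> F \<Longrightarrow> y \<in> F \<Longrightarrow> x / y \<in> F"
  by (simp add: is_subfield_def divide_inverse)

lemma is_subfield_abs:
  "is_subfield F \<Longrightarrow> x \<in> F \<Longrightarrow> \<bar>x\<bar> \<in> (F :: 'k::linordered_field set)"
  by (cases "0 \<le> x") (auto simp: is_subfield_def)

lemma is_subfield_gen_subfield: "is_subfield (gen_subfield S)"
  unfolding is_subfield_def gen_subfield_def by blast

lemma subset_gen_subfield: "S \<subseteq> gen_subfield S"
  unfolding gen_subfield_def by blast

lemma gen_subfield_least: "is_subfield F \<Longrightarrow> S \<subseteq> F \<Longrightarrow> gen_subfield S \<subseteq> F"
  unfolding gen_subfield_def by blast

lemma rc_in_mono: "F \<subseteq> F' \<Longrightarrow> rc_in F \<subseteq> rc_in F'"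
  unfolding rc_in_def by blast

lemma subfield_subset_rc_in:
  assumes "is_subfield F"
  shows "F \<subseteq> rc_in F"
proof
  fix x assume "x \<in> F"
  hence "coeff [:- x, 1:] i \<in> F" for i
    using assms by (auto simp: is_subfield_def coeff_pCons split: nat.split)
  thus "x \<in> rc_in F"
    unfolding rc_in_def by (intro CollectI exI[of _ "[:- x, 1:]"]) auto
qed

lemma abs_root_le_power:
  assumes "1 \<le> e" and "is_subfield F" and "\<forall>y\<in>F. power_bounded e y"
    and "p \<noteq> 0" and "\<forall>i. coeff p i \<in> F" and "poly p x = 0"
  obtains n where "\<bar>x\<bar> \<le> e ^ n"
proof -
  define s where "s = (\<Sum>i<degree p. \<bar>coeff p i / lead_coeff p\<bar>)"
  have "s \<in> F"
    unfolding s_def using assms(2,5)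
    by (intro is_subfield_sum is_subfield_abs is_subfield_divide) auto
  then obtain n where "\<bar>s\<bar> \<le> e ^ n"
    using assms(3) by (auto simp: power_bounded_def)
  moreover have "1 \<le> e ^ n"
    using assms(1) by simp
  moreover have "\<bar>x\<bar> \<le> max 1 s"
    using abs_root_le_Cauchy_bound[OF assms(4,6)] by (simp add: s_def)
  ultimately have "\<bar>x\<bar> \<le> e ^ n"
    using abs_ge_self[of s] by (simp split: if_splits)
  thus ?thesis
    by (rule that)
qed

lemma rc_in_power_bounded:
  assumes "1 \<le> e" and "is_subfield F" and "\<forall>y\<in>F. power_bounded e y" and "x \<in> rc_in F"
  shows "power_bounded e x"
proof -
  obtain p where p: "p \<noteq> 0" "\<forall>i. coeff p i \<in> F" "poly p x = 0"
    using assms(4) by (auto simp: rc_in_def)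
  obtain n where n: "\<bar>x\<bar> \<le> e ^ n"
    by (rule abs_root_le_power[OF assms(1-3) p])
  show ?thesis
  proof (cases "x = 0")
    case True
    thus ?thesis
      using assms(1) by (auto simp: power_bounded_def)
  next
    case False
    have "reflect_poly p \<noteq> 0" and "\<forall>i. coeff (reflect_poly p) i \<in> F"
      and "poly (reflect_poly p) (inverse x) = 0"
      using p assms(2) False
      by (auto simp: coeff_reflect_poly is_subfield_def poly_reflect_poly_nz)
    then obtain m where "\<bar>inverse x\<bar> \<le> e ^ m"
      by (rule abs_root_le_power[OF assms(1-3)])
    hence "1 \<le> \<bar>x\<bar> * e ^ m"
      using False by (simp add: field_simps)
    thus ?thesis
      using power_bounded_intro[OF assms(1) n] by blast
  qed
qed

definition is_subring :: "'k::field set \<Rightarrow> bool" where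
  "is_subring R \<longleftrightarrow> 1 \<in> R \<and> (\<forall>x\<in>R. \<forall>y\<in>R. x + y \<in> R \<and> x * y \<in> R) \<and> (\<forall>x\<in>R. - x \<in> R)"

definition fractions :: "'k::field set \<Rightarrow> 'k set" where
  "fractions R = {a / b | a b. a \<in> R \<and> b \<in> R}"

lemma fractionsI: "a \<in> R \<Longrightarrow> b \<in> R \<Longrightarrow> a / b \<in> fractions R"
  unfolding fractions_def by blast

lemma subset_fractions: "is_subring R \<Longrightarrow> R \<subseteq> fractions R"
  using fractionsI[of _ R 1] by (force simp: is_subring_def)

lemma is_subfield_fractions:
  assumes "is_subring R"
  shows "is_subfield (fractions R)"
proof -
  have one: "1 \<in> R" and add: "x \<in> R \<Longrightarrow> y \<in> R \<Longrightarrow> x + y \<in> R"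
    and mult: "x \<in> R \<Longrightarrow> y \<in> R \<Longrightarrow> x * y \<in> R" and neg: "x \<in> R \<Longrightarrow> - x \<in> R" for x y
    using assms by (auto simp: is_subring_def)
  have zero: "0 \<in> R"
    using add[OF one neg[OF one]] by simp
  have "a / b + c / d \<in> fractions R" if "a \<in> R" "b \<in> R" "c \<in> R" "d \<in> R" for a b c d
  proof -
    consider "b = 0" | "d = 0" | "b \<noteq> 0" "d \<noteq> 0"
      by blast
    thus ?thesis
    proof cases
      case 3
      hence "a / b + c / d = (a * d + c * b) / (b * d)"
        by (simp add: field_simps)
      thus ?thesis
        using that by (simp add: fractionsI add mult)
    qed (use that fractionsI in auto)
  qed
  moreover have "a / b * (c / d) \<in> fractions R" if "a \<in> R" "b \<in> R" "c \<in> R" "d \<in> R" for a b c d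
    using that by (simp add: fractionsI mult)
  moreover have "- (a / b) \<in> fractions R" and "inverse (a / b) \<in> fractions R"
    if "a \<in> R" "b \<in> R" for a b
    using that fractionsI[OF neg] fractionsI[of b R a] by auto
  moreover have "0 \<in> fractions R" and "1 \<in> fractions R"
    using fractionsI[OF zero one] fractionsI[OF one one] by simp_all
  ultimately show ?thesis
    unfolding is_subfield_def by (auto simp: fractions_def[of R])
qed

lemma circle_idempotent:
  fixes u :: "'k::linordered_field \<times> 'k"
  assumes "u \<in> circle" and "cmul u u = u"
  shows "u = (1, 0)"
proof -
  obtain a b where u: "u = (a, b)"
    by fastforce
  have norm: "a * a + b * b = 1" and re: "a * a - b * b = a" and im: "b * (2 * a - 1) = 0"
    using assms by (auto simp: u circle_def cmul_def algebra_simps)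
  have "b = 0"
  proof (rule ccontr)
    assume "b \<noteq> 0"
    hence "2 * a = 1"
      using im by simp
    moreover have "4 * (b * b) = (2 * a) * (2 * a) - 2 * (2 * a)"
      using re by (simp add: algebra_simps)
    ultimately have "4 * (b * b) = - 1"
      by simp
    thus False
      using zero_le_square[of b] by linarith
  qed
  thus ?thesis
    using norm re u by (auto simp del: mult_cancel_right1 mult_cancel_left1)
qed

lemma multiplicative_on_powers_power_int:
  fixes f :: "'a::field \<Rightarrow> 'b::field"
  assumes mult: "\<And>i j. f (c powi i * c powi j) = f (c powi i) * f (c powi j)"
    and "c \<noteq> 0" and "f 1 \<noteq> 0"
  shows "f (c powi k) = f c powi k"
proof -
  have "f 1 = 1"
    using mult[of 0 0] assms(3) by simp
  have nat: "f (c ^ n) = f c ^ n" for n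
  proof (induction n)
    case (Suc n)
    thus ?case
      using mult[of 1 "int n"] by (simp add: power_int_of_nat)
  qed (simp add: \<open>f 1 = 1\<close>)
  show ?thesis
  proof (cases "0 \<le> k")
    case True
    thus ?thesis
      using nat[of "nat k"] by (simp add: power_int_def)
  next
    case False
    have "c powi (- k) = c ^ nat (- k)"
      using False by (simp add: power_int_def)
    moreover have "c powi k * c powi (- k) = 1"
      using assms(2) by (simp add: power_int_minus)
    ultimately have "f (c powi k) * f c ^ nat (- k) = 1"
      using mult[of k "- k"] nat[of "nat (- k)"] \<open>f 1 = 1\<close> by simp
    hence "f (c powi k) = inverse (f c ^ nat (- k))"
      by (metis inverse_unique mult.commute)
    thus ?thesis
      using False by (simp add: power_int_def power_inverse)
  qed
qed

locale discrete_value_group =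
  fixes A :: "'k::linordered_field set" and e :: 'k
  assumes pos: "a \<in> A \<Longrightarrow> 0 < a"
    and mult_closed: "a \<in> A \<Longrightarrow> b \<in> A \<Longrightarrow> a * b \<in> A"
    and inverse_closed: "a \<in> A \<Longrightarrow> inverse a \<in> A"
    and generator: "e \<in> A" and one_less: "1 < e"
    and least: "a \<in> A \<Longrightarrow> 1 < a \<Longrightarrow> e \<le> a"
    and bracket: "0 < k \<Longrightarrow> \<exists>a\<in>A. a \<le> k \<and> k < a * e"
begin

lemma divide_closed: "a \<in> A \<Longrightarrow> b \<in> A \<Longrightarrow> a / b \<in> A"
  by (simp add: divide_inverse mult_closed inverse_closed)

lemma power_closed: "e ^ n \<in> A"
proof (induction n)
  case 0
  thus ?case
    using divide_closed[OF generator generator] one_less by simp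
qed (simp add: mult_closed generator)

lemma bracket_unique:
  assumes "a \<in> A" "a \<le> k" "k < a * e" and "b \<in> A" "b \<le> k" "k < b * e"
  shows "a = b"
proof (rule ccontr)
  have "\<not> a < b" if "a \<in> A" "k < a * e" "b \<in> A" "b \<le> k" for a b
  proof
    assume "a < b"
    hence "e \<le> b / a"
      using that pos[of a] by (intro least divide_closed) simp_all
    hence "a * e \<le> b"
      using pos[OF \<open>a \<in> A\<close>] by (simp add: field_simps)
    thus False
      using that by simp
  qed
  moreover assume "a \<noteq> b"
  ultimately show False
    using assms by (meson linorder_neqE)
qed

lemma lam_eqI: "a \<in> A \<Longrightarrow> a \<le> k \<Longrightarrow> k < a * e \<Longrightarrow> lam A e k = a"
  unfolding lam_def by (rule the_equality) (auto intro: bracket_unique)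

lemma eq_power_if_between:
  assumes "a \<in> A" and "1 \<le> a" and "a < e ^ m"
  shows "\<exists>n. a = e ^ n"
  using assms
proof (induction m arbitrary: a)
  case (Suc m)
  show ?case
  proof (cases "a < e")
    case True
    hence "a = 1"
      using Suc.prems least by force
    thus ?thesis
      by (metis power_0)
  next
    case False
    have "a / e \<in> A" and "1 \<le> a / e" and "a / e < e ^ m"
      using Suc.prems False one_less by (simp_all add: divide_closed generator field_simps)
    then obtain n where "a / e = e ^ n"
      using Suc.IH by blast
    hence "a = e ^ Suc n"
      using one_less by (simp add: field_simps)
    thus ?thesis ..
  qed
qed simp

lemma lam_power_bounded:
  assumes "power_bounded e x" and "0 < x"
  shows "\<exists>k. lam A e x = e powi k"
proof -
  obtain n where x_le: "x \<le> e ^ n" and x_ge: "1 \<le> x * e ^ n"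
    using assms by (auto simp: power_bounded_def)
  obtain a where a: "a \<in> A" "a \<le> x" "x < a * e"
    using bracket[OF assms(2)] by blast
  define b where "b = a * e ^ Suc n"
  have "b \<in> A"
    unfolding b_def using a(1) by (rule mult_closed[OF _ power_closed])
  moreover have "1 < b"
  proof -
    have "x * e ^ n < a * e * e ^ n"
      using a(3) one_less by simp
    thus ?thesis
      using x_ge by (simp add: b_def mult.assoc)
  qed
  moreover have "b < e ^ Suc (Suc (n + n))"
  proof -
    have "b \<le> e ^ n * e ^ Suc n"
      unfolding b_def using a(2) x_le one_less by (simp add: mult_right_mono)
    also have "\<dots> < e ^ n * e ^ Suc n * e"
      using one_less by simp
    finally show ?thesis
      by (simp add: power_add algebra_simps)
  qed
  ultimately obtain m where "b = e ^ m"
    using eq_power_if_between by (meson less_imp_le)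
  hence "a = e ^ m / e ^ Suc n"
    using one_less by (simp add: b_def field_simps)
  also have "\<dots> = e powi (int m - int (Suc n))"
    using one_less by (simp add: power_int_diff flip: power_int_of_nat)
  finally have "a = e powi (int m - int (Suc n))" .
  thus ?thesis
    using lam_eqI[OF a] by blast
qed

end

locale oriented_model = discrete_value_group A "dp \<epsilon>"
  for \<Gamma> :: "complex set" and \<epsilon> :: real and A :: "'k::linordered_field set"
    and gp :: "complex \<Rightarrow> 'k \<times> 'k" and dp :: "real \<Rightarrow> 'k" +
  assumes one_mem_\<Gamma>: "1 \<in> \<Gamma>" and eps_gt_1: "1 < \<epsilon>"
    and gp_circle: "\<gamma> \<in> \<Gamma> \<Longrightarrow> gp \<gamma> \<in> circle"
    and gp_mult: "\<gamma>1 \<in> \<Gamma> \<Longrightarrow> \<gamma>2 \<in> \<Gamma> \<Longrightarrow> gp (\<gamma>1 * \<gamma>2) = cmul (gp \<gamma>1) (gp \<gamma>2)"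
    and dp_mem: "\<delta> \<in> range (\<lambda>k::int. \<epsilon> powi k) \<Longrightarrow> dp \<delta> \<in> A"
    and dp_mult: "\<delta>1 \<in> range (\<lambda>k::int. \<epsilon> powi k) \<Longrightarrow> \<delta>2 \<in> range (\<lambda>k::int. \<epsilon> powi k) \<Longrightarrow>
      dp (\<delta>1 * \<delta>2) = dp \<delta>1 * dp \<delta>2"
    and orientation: "\<forall>i. g i \<in> \<Gamma> \<Longrightarrow> \<forall>i. d i \<in> range (\<lambda>k::int. \<epsilon> powi k) \<Longrightarrow>
      0 < ieval Q (\<lambda>i. fst (gp (g i)) * dp (d i)) \<longleftrightarrow> 0 < ieval Q (\<lambda>i. Re (g i * complex_of_real (d i)))"

lemma oriented_model_if_model_T:
  assumes "circle_subgroup \<Gamma>" and "1 < \<epsilon>" and "model_T \<Gamma> \<epsilon> G A gp dp"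
  shows "oriented_model \<Gamma> \<epsilon> A gp dp"
proof -
  have "G \<subseteq> circle \<and> A \<subseteq> {x. 0 < x} \<and> (\<forall>a\<in>A. \<forall>b\<in>A. a * b \<in> A) \<and> (\<forall>a\<in>A. inverse a \<in> A) \<and>
     dp \<epsilon> \<in> A \<and> 1 < dp \<epsilon> \<and> (\<forall>a\<in>A. 1 < a \<longrightarrow> dp \<epsilon> \<le> a) \<and>
     (\<forall>k>0. \<exists>a\<in>A. a \<le> k \<and> k < a * dp \<epsilon>) \<and>
     (\<forall>\<gamma>\<in>\<Gamma>. gp \<gamma> \<in> G) \<and> (\<forall>\<gamma>1\<in>\<Gamma>. \<forall>\<gamma>2\<in>\<Gamma>. gp (\<gamma>1 * \<gamma>2) = cmul (gp \<gamma>1) (gp \<gamma>2)) \<and>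
     (\<forall>\<delta>\<in>range (\<lambda>k::int. \<epsilon> powi k). dp \<delta> \<in> A) \<and>
     (\<forall>\<delta>1\<in>range (\<lambda>k::int. \<epsilon> powi k). \<forall>\<delta>2\<in>range (\<lambda>k::int. \<epsilon> powi k).
         dp (\<delta>1 * \<delta>2) = dp \<delta>1 * dp \<delta>2) \<and>
     (\<forall>Q::ipoly. \<forall>g::nat \<Rightarrow> complex. \<forall>d::nat \<Rightarrow> real.
        (\<forall>i. g i \<in> \<Gamma>) \<and> (\<forall>i. d i \<in> range (\<lambda>k::int. \<epsilon> powi k)) \<longrightarrow>
        (0 < ieval Q (\<lambda>i. fst (gp (g i)) * dp (d i)) \<longleftrightarrow>
         0 < ieval Q (\<lambda>i. Re (g i * complex_of_real (d i)))))"
    using assms(3) unfolding model_T_def by (elim conjE) (intro conjI; assumption)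
  thus ?thesis
    using assms(1,2) unfolding circle_subgroup_def
    by unfold_locales blast+
qed

context oriented_model
begin

abbreviation \<Delta> :: "real set" where
  "\<Delta> \<equiv> range (\<lambda>k::int. \<epsilon> powi k)"

lemma gp_one: "gp 1 = (1, 0)"
  using gp_mult[OF one_mem_\<Gamma> one_mem_\<Gamma>] gp_circle[OF one_mem_\<Gamma>]
  by (intro circle_idempotent) simp_all

lemma dp_power_int: "dp (\<epsilon> powi k) = dp \<epsilon> powi k"
proof (rule multiplicative_on_powers_power_int)
  show "dp (\<epsilon> powi i * \<epsilon> powi j) = dp (\<epsilon> powi i) * dp (\<epsilon> powi j)" for i j
    by (intro dp_mult) simp_all
  show "dp 1 \<noteq> 0"
    using pos[OF dp_mem[of 1]] by (metis power_int_0_right rangeI less_irrefl)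
qed (use eps_gt_1 in simp)

definition admissible :: "(nat \<Rightarrow> complex) \<Rightarrow> (nat \<Rightarrow> real) \<Rightarrow> bool" where
  "admissible g d \<longleftrightarrow> (\<forall>i. g i \<in> \<Gamma>) \<and> (\<forall>i. d i \<in> \<Delta>)"

definition generators_K :: "(nat \<Rightarrow> complex) \<Rightarrow> (nat \<Rightarrow> real) \<Rightarrow> nat \<Rightarrow> 'k" where
  "generators_K g d = (\<lambda>i. fst (gp (g i)) * dp (d i))"

definition generators_R :: "(nat \<Rightarrow> complex) \<Rightarrow> (nat \<Rightarrow> real) \<Rightarrow> nat \<Rightarrow> real" where
  "generators_R g d = (\<lambda>i. Re (g i * complex_of_real (d i)))"

lemma orientation_le:
  assumes "admissible g d"
  shows "ieval p (generators_K g d) \<le> ieval q (generators_K g d) \<longleftrightarrow>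
    ieval p (generators_R g d) \<le> ieval q (generators_R g d)"
  using orientation[of g d "ipoly_diff p q"] assms
  unfolding admissible_def generators_K_def generators_R_def by (simp add: not_less[symmetric])

lemma orientation_eq:
  assumes "admissible g d"
  shows "ieval p (generators_K g d) = ieval q (generators_K g d) \<longleftrightarrow>
    ieval p (generators_R g d) = ieval q (generators_R g d)"
  using orientation_le[OF assms, of p q] orientation_le[OF assms, of q p] by auto

lemma power_bounded_ieval:
  assumes "admissible g d"
  shows "power_bounded (dp \<epsilon>) (ieval p (generators_K g d))"
proof -
  \<comment> \<open>Prepend the generator eps' = Re(1' eps') as variable 0: the real bounds on r are then
    polynomial inequalities in the generators, which the orientation axioms carry over to K.\<close>
  define g' where "g' = case_nat 1 g"
  define d' where "d' = case_nat \<epsilon> d"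
  have adm: "admissible g' d'"
    using assms one_mem_\<Gamma>
    by (auto simp: admissible_def g'_def d'_def intro: range_eqI[of _ _ 1] split: nat.split)
  define y where "y = ieval p (generators_K g d)"
  define r where "r = ieval p (generators_R g d)"
  define P where "P = ipoly_rename Suc p"
  have "generators_K g' d' \<circ> Suc = generators_K g d" and "generators_R g' d' \<circ> Suc = generators_R g d"
    by (auto simp: generators_K_def generators_R_def g'_def d'_def)
  hence P_K: "ieval P (generators_K g' d') = y" and P_R: "ieval P (generators_R g' d') = r"
    by (simp_all add: P_def y_def r_def)
  have X0_K: "generators_K g' d' 0 = dp \<epsilon>" and X0_R: "generators_R g' d' 0 = \<epsilon>"
    by (simp_all add: generators_K_def generators_R_def g'_def d'_def gp_one)
  obtain n where r_le: "r\<^sup>2 \<le> (\<epsilon> ^ n)\<^sup>2" and r_ge: "r \<noteq> 0 \<longrightarrow> 1 \<le> (r * \<epsilon> ^ n)\<^sup>2"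
    using power_bounded_real[OF eps_gt_1, of r] eps_gt_1 by (auto simp: power_bounded_iff_squares)
  define E where "E = ipoly_power (IVar 0) n"
  have "y\<^sup>2 \<le> (dp \<epsilon> ^ n)\<^sup>2"
    using r_le orientation_le[OF adm, of "IMul P P" "IMul E E"]
    by (simp add: E_def P_K P_R X0_K X0_R power2_eq_square)
  moreover have "y \<noteq> 0 \<longrightarrow> 1 \<le> (y * dp \<epsilon> ^ n)\<^sup>2"
    using r_ge orientation_eq[OF adm, of P "IConst 0"]
      orientation_le[OF adm, of "IConst 1" "IMul (IMul P E) (IMul P E)"]
    by (simp add: E_def P_K P_R X0_K X0_R power2_eq_square)
  ultimately show ?thesis
    using one_less by (auto simp: power_bounded_iff_squares y_def)
qed

definition generated_ring :: "'k set" where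
  "generated_ring = {ieval p (generators_K g d) | p g d. admissible g d}"

lemma generated_ring_common_generators:
  assumes "a \<in> generated_ring" and "b \<in> generated_ring"
  obtains p q g d where "admissible g d"
    and "a = ieval p (generators_K g d)" and "b = ieval q (generators_K g d)"
proof -
  obtain p g1 d1 where 1: "admissible g1 d1" "a = ieval p (generators_K g1 d1)"
    using assms(1) unfolding generated_ring_def by blast
  obtain q g2 d2 where 2: "admissible g2 d2" "b = ieval q (generators_K g2 d2)"
    using assms(2) unfolding generated_ring_def by blast
  define g where "g i = (if even i then g1 (i div 2) else g2 (i div 2))" for i
  define d where "d i = (if even i then d1 (i div 2) else d2 (i div 2))" for i
  have "generators_K g d \<circ> (\<lambda>i. 2 * i) = generators_K g1 d1"
    and "generators_K g d \<circ> (\<lambda>i. Suc (2 * i)) = generators_K g2 d2"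
    by (auto simp: generators_K_def g_def d_def)
  hence "a = ieval (ipoly_rename (\<lambda>i. 2 * i) p) (generators_K g d)"
    and "b = ieval (ipoly_rename (\<lambda>i. Suc (2 * i)) q) (generators_K g d)"
    using 1 2 by simp_all
  moreover have "admissible g d"
    using 1(1) 2(1) by (simp add: admissible_def g_def d_def)
  ultimately show ?thesis
    using that by blast
qed

lemma is_subring_generated_ring: "is_subring generated_ring"
proof -
  have "admissible (\<lambda>_. 1) (\<lambda>_. 1)"
    using one_mem_\<Gamma> by (auto simp: admissible_def intro: range_eqI[of _ _ 0])
  hence const: "ieval p (generators_K (\<lambda>_. 1) (\<lambda>_. 1)) \<in> generated_ring" for p
    unfolding generated_ring_def by blast
  have "a + b \<in> generated_ring \<and> a * b \<in> generated_ring"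
    if ab: "a \<in> generated_ring" "b \<in> generated_ring" for a b
  proof -
    obtain p q g d where "admissible g d"
      and "a = ieval p (generators_K g d)" and "b = ieval q (generators_K g d)"
      using ab by (rule generated_ring_common_generators)
    moreover have "a + b = ieval (IAdd p q) (generators_K g d)"
      and "a * b = ieval (IMul p q) (generators_K g d)"
      using calculation by simp_all
    ultimately show ?thesis
      unfolding generated_ring_def by blast
  qed
  moreover have "1 \<in> generated_ring"
    using const[of "IConst 1"] by simp
  moreover have "- a \<in> generated_ring" if "a \<in> generated_ring" for a
    using calculation(1)[OF const[of "IConst (-1)"] that] by simp
  ultimately show ?thesis
    unfolding is_subring_def by blast
qed

lemma generator_mem_generated_ring:
  assumes "\<gamma> \<in> \<Gamma>" and "\<delta> \<in> \<Delta>"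
  shows "fst (gp \<gamma>) * dp \<delta> \<in> generated_ring"
proof -
  have "admissible (\<lambda>_. \<gamma>) (\<lambda>_. \<delta>)"
    using assms by (simp add: admissible_def)
  hence "ieval (IVar 0) (generators_K (\<lambda>_. \<gamma>) (\<lambda>_. \<delta>)) \<in> generated_ring"
    unfolding generated_ring_def by blast
  thus ?thesis
    by (simp add: generators_K_def)
qed

abbreviation K' :: "'k set" where
  "K' \<equiv> rc_in (gen_subfield {fst (gp \<gamma>) * dp \<delta> | \<gamma> \<delta>. \<gamma> \<in> \<Gamma> \<and> \<delta> \<in> \<Delta>})"

lemma power_bounded_K':
  assumes "x \<in> K'"
  shows "power_bounded (dp \<epsilon>) x"
proof -
  let ?F = "fractions generated_ring"
  have "is_subfield ?F"
    by (rule is_subfield_fractions[OF is_subring_generated_ring])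
  moreover have "\<forall>y\<in>?F. power_bounded (dp \<epsilon>) y"
    using power_bounded_ieval one_less
    by (auto simp: fractions_def generated_ring_def intro!: power_bounded_divide)
  moreover have "gen_subfield {fst (gp \<gamma>) * dp \<delta> | \<gamma> \<delta>. \<gamma> \<in> \<Gamma> \<and> \<delta> \<in> \<Delta>} \<subseteq> ?F"
    using generator_mem_generated_ring subset_fractions[OF is_subring_generated_ring]
    by (intro gen_subfield_least[OF \<open>is_subfield ?F\<close>]) blast
  hence "x \<in> rc_in ?F"
    using assms rc_in_mono by blast
  ultimately show ?thesis
    using one_less by (intro rc_in_power_bounded) auto
qed

theorem lam_image_positive_K': "lam A (dp \<epsilon>) ` {x \<in> K'. 0 < x} = dp ` \<Delta>"
proof (intro equalityI subsetI)
  fix a assume "a \<in> lam A (dp \<epsilon>) ` {x \<in> K'. 0 < x}"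
  then obtain x where x: "x \<in> K'" "0 < x" and a: "a = lam A (dp \<epsilon>) x"
    by blast
  obtain k where "lam A (dp \<epsilon>) x = dp \<epsilon> powi k"
    using lam_power_bounded[OF power_bounded_K'[OF x(1)] x(2)] ..
  hence "a = dp (\<epsilon> powi k)"
    by (simp add: a dp_power_int)
  thus "a \<in> dp ` \<Delta>"
    by blast
next
  fix a assume "a \<in> dp ` \<Delta>"
  then obtain \<delta> where \<delta>: "\<delta> \<in> \<Delta>" and a: "a = dp \<delta>"
    by blast
  have "a = fst (gp 1) * dp \<delta>"
    by (simp add: a gp_one)
  hence "a \<in> {fst (gp \<gamma>) * dp \<delta> | \<gamma> \<delta>. \<gamma> \<in> \<Gamma> \<and> \<delta> \<in> \<Delta>}"
    using one_mem_\<Gamma> \<delta> by blast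
  hence "a \<in> K'"
    by (intro subsetD[OF subfield_subset_rc_in[OF is_subfield_gen_subfield]]
        subsetD[OF subset_gen_subfield])
  moreover have "0 < a"
    using pos[OF dp_mem[OF \<delta>]] by (simp add: a)
  moreover have "lam A (dp \<epsilon>) a = a"
    using \<open>0 < a\<close> one_less by (intro lam_eqI) (simp_all add: a dp_mem[OF \<delta>])
  ultimately show "a \<in> lam A (dp \<epsilon>) ` {x \<in> K'. 0 < x}"
    by (intro image_eqI[of a _ a]) simp_all
qed

end

theorem mainTheorem9:
  fixes \<Gamma> :: "complex set" and \<epsilon> :: real
    and G :: "('k::linordered_field \<times> 'k) set" and A :: "'k set"
    and gp :: "complex \<Rightarrow> 'k \<times> 'k" and dp :: "real \<Rightarrow> 'k"
  assumes "circle_subgroup \<Gamma>" and "finite_rank \<Gamma>" and "1 < \<epsilon>"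
    and "model_T \<Gamma> \<epsilon> G A gp dp"
  shows "lam A (dp \<epsilon>) ` {x \<in> rc_in (gen_subfield
            {fst (gp \<gamma>) * dp \<delta> | \<gamma> \<delta>. \<gamma> \<in> \<Gamma> \<and> \<delta> \<in> range (\<lambda>k::int. \<epsilon> powi k)}). 0 < x}
         = dp ` range (\<lambda>k::int. \<epsilon> powi k)"
proof -
  interpret oriented_model \<Gamma> \<epsilon> A gp dp
    using oriented_model_if_model_T[OF assms(1,3,4)] .
  show ?thesis
    by (rule lam_image_positive_K')
qed

end
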